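(* Let $\psi:A\to A'$ be a contraction of dimer algebras (of dimer quivers $Q$, $Q'$ on a torus, obtained by contracting a set of arrows $Q_1^*\subseteq Q_1$), and suppose $Q'$ has a perfect matching. Then no unit cycle of $Q$ is contracted to a vertex by $\psi$; that is, no unit cycle of $Q$ has all of its arrows in $Q_1^*$.
   Context: $k$ is an algebraically closed field. A dimer quiver on a torus is a finite quiver $Q$ embedded in $T^2$ such that each connected component of $T^2\setminus Q$ is simply connected and bounded by an oriented cycle (a unit cycle). Paths compose right to left. The dimer algebra is $A=kQ/I$, $I=\langle p-q\mid\exists a\in Q_1: ap,aq\text{ unit cycles}\rangle$. A perfect matching is a set of arrows containing exactly one arrow of each unit cycle. Contractions: for $Q_1^*\subseteq Q_1$, $Q'$ is obtained by removing each arrow of $Q_1^*$ and identifying its head and tail; $\psi:kQ\to kQ'$ is the $k$-linear map sending vertices to their images, arrows not in $Q_1^*$ to themselves, $\delta\in Q_1^*$ to $e_{\operatorname{t}(\delta)}$, multiplicative on paths. If $Q'$ is a dimer quiver with dimer algebra $A'=kQ'/I'$ and $\psi(I)\subseteq I'$, $\psi$ is called a contraction of dimer algebras. *)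

theory Defs
  imports "HOL-Combinatorics.Permutations" "HOL-Computational_Algebra.Polynomial"
begin

definition alg_closed :: "'k::field itself \<Rightarrow> bool" where
  "alg_closed _ \<longleftrightarrow> (\<forall>p::'k poly. degree p > 0 \<longrightarrow> (\<exists>x. poly p x = 0))"

text \<open>A quiver is given by a vertex set V, an arrow set E and tail/head maps t, h.
  A path is a pair (start vertex, list of arrows in traversal order); the trivial
  path at v is (v, []).\<close>

type_synonym ('v,'a) qpath = "'v \<times> 'a list"

definition is_path :: "'v set \<Rightarrow> 'a set \<Rightarrow> ('a \<Rightarrow> 'v) \<Rightarrow> ('a \<Rightarrow> 'v) \<Rightarrow> ('v,'a) qpath \<Rightarrow> bool" where
  "is_path V E t h p \<longleftrightarrow> fst p \<in> V \<and> set (snd p) \<subseteq> E \<and>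
     (snd p \<noteq> [] \<longrightarrow> t (hd (snd p)) = fst p) \<and>
     (\<forall>i. Suc i < length (snd p) \<longrightarrow> h (snd p ! i) = t (snd p ! Suc i))"

definition p_end :: "('a \<Rightarrow> 'v) \<Rightarrow> ('v,'a) qpath \<Rightarrow> 'v" where
  "p_end h p = (if snd p = [] then fst p else h (last (snd p)))"

text \<open>Paths compose right to left: pcomp h x y is "x after y" (first y, then x).\<close>
definition pcomp :: "('a \<Rightarrow> 'v) \<Rightarrow> ('v,'a) qpath \<Rightarrow> ('v,'a) qpath \<Rightarrow> ('v,'a) qpath option" where
  "pcomp h x y = (if p_end h y = fst x then Some (fst y, snd y @ snd x) else None)"

text \<open>Elements of the path algebra kQ: finitely supported k-valued functions on the paths.\<close>
definition in_kQ :: "'v set \<Rightarrow> 'a set \<Rightarrow> ('a \<Rightarrow> 'v) \<Rightarrow> ('a \<Rightarrow> 'v) \<Rightarrow> (('v,'a) qpath \<Rightarrow> 'k::field) \<Rightarrow> bool" where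
  "in_kQ V E t h f \<longleftrightarrow> finite {p. f p \<noteq> 0} \<and> (\<forall>p. f p \<noteq> 0 \<longrightarrow> is_path V E t h p)"

definition kQ_mult :: "('a \<Rightarrow> 'v) \<Rightarrow> (('v,'a) qpath \<Rightarrow> 'k::field) \<Rightarrow> (('v,'a) qpath \<Rightarrow> 'k) \<Rightarrow> (('v,'a) qpath \<Rightarrow> 'k)" where
  "kQ_mult h f g = (\<lambda>r. \<Sum>(x,y)\<in>{(x,y). f x \<noteq> 0 \<and> g y \<noteq> 0 \<and> pcomp h x y = Some r}. f x * g y)"

definition kQ_delta :: "('v,'a) qpath \<Rightarrow> (('v,'a) qpath \<Rightarrow> 'k::field)" where
  "kQ_delta p = (\<lambda>r. if r = p then 1 else 0)"

definition two_sided_ideal :: "'v set \<Rightarrow> 'a set \<Rightarrow> ('a \<Rightarrow> 'v) \<Rightarrow> ('a \<Rightarrow> 'v) \<Rightarrow> (('v,'a) qpath \<Rightarrow> 'k::field) set \<Rightarrow> bool" where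
  "two_sided_ideal V E t h J \<longleftrightarrow> J \<subseteq> {f. in_kQ V E t h f} \<and> (\<lambda>_. 0) \<in> J \<and>
     (\<forall>f\<in>J. \<forall>g\<in>J. (\<lambda>r. f r + g r) \<in> J) \<and>
     (\<forall>f\<in>J. \<forall>c. (\<lambda>r. c * f r) \<in> J) \<and>
     (\<forall>f\<in>J. \<forall>u. in_kQ V E t h u \<longrightarrow> kQ_mult h u f \<in> J \<and> kQ_mult h f u \<in> J)"

definition gen_ideal :: "'v set \<Rightarrow> 'a set \<Rightarrow> ('a \<Rightarrow> 'v) \<Rightarrow> ('a \<Rightarrow> 'v) \<Rightarrow> (('v,'a) qpath \<Rightarrow> 'k::field) set \<Rightarrow> (('v,'a) qpath \<Rightarrow> 'k) set" where
  "gen_ideal V E t h S = \<Inter>{J. two_sided_ideal V E t h J \<and> S \<subseteq> J}"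

text \<open>The embedding of Q in the torus is encoded combinatorially: pos a (resp. neg a) is the
  arrow following a in the unique counterclockwise (resp. clockwise) oriented unit cycle
  containing a. Unit cycles are the orbits of pos and neg.\<close>

definition cyc_orbit :: "('a \<Rightarrow> 'a) \<Rightarrow> 'a \<Rightarrow> 'a set" where
  "cyc_orbit f a = {(f ^^ n) a | n. True}"

definition cyc_len :: "('a \<Rightarrow> 'a) \<Rightarrow> 'a \<Rightarrow> nat" where
  "cyc_len f a = (LEAST n. 0 < n \<and> (f ^^ n) a = a)"

text \<open>For the unit cycle through a given by f, cyc_rest f h a is the path p with
  (unit cycle) = a p, i.e. the rest of the cycle, from h a to t a.\<close>
definition cyc_rest :: "('a \<Rightarrow> 'a) \<Rightarrow> ('a \<Rightarrow> 'v) \<Rightarrow> 'a \<Rightarrow> ('v,'a) qpath" where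
  "cyc_rest f h a = (h a, map (\<lambda>i. (f ^^ i) a) [1..<cyc_len f a])"

definition dimer_quiver :: "'v set \<Rightarrow> 'a set \<Rightarrow> ('a \<Rightarrow> 'v) \<Rightarrow> ('a \<Rightarrow> 'v) \<Rightarrow> ('a \<Rightarrow> 'a) \<Rightarrow> ('a \<Rightarrow> 'a) \<Rightarrow> bool" where
  "dimer_quiver V E t h pos neg \<longleftrightarrow>
     finite V \<and> finite E \<and> V \<noteq> {} \<and> t ` E \<subseteq> V \<and> h ` E \<subseteq> V \<and>
     pos permutes E \<and> neg permutes E \<and>
     (\<forall>a\<in>E. t (pos a) = h a \<and> t (neg a) = h a) \<and>
     \<comment> \<open>every vertex has a disk neighbourhood: its incident corners form one cycle\<close>
     (\<forall>v\<in>V. \<exists>a\<in>E. h a = v) \<and>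
     (\<forall>a\<in>E. \<forall>b\<in>E. h a = h b \<longrightarrow> (\<exists>n. ((\<lambda>x. inv neg (pos x)) ^^ n) a = b)) \<and>
     \<comment> \<open>connected\<close>
     (\<forall>u\<in>V. \<forall>v\<in>V. (u, v) \<in> ({(t a, h a) | a. a \<in> E} \<union> {(h a, t a) | a. a \<in> E})\<^sup>*) \<and>
     \<comment> \<open>Euler characteristic 0: the surface is a torus\<close>
     int (card V) - int (card E) + int (card (cyc_orbit pos ` E)) + int (card (cyc_orbit neg ` E)) = 0"

definition dimer_ideal :: "'v set \<Rightarrow> 'a set \<Rightarrow> ('a \<Rightarrow> 'v) \<Rightarrow> ('a \<Rightarrow> 'v) \<Rightarrow> ('a \<Rightarrow> 'a) \<Rightarrow> ('a \<Rightarrow> 'a) \<Rightarrow> (('v,'a) qpath \<Rightarrow> 'k::field) set" where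
  "dimer_ideal V E t h pos neg = gen_ideal V E t h
     {(\<lambda>r. kQ_delta p r - kQ_delta q r) | a p q. a \<in> E \<and>
        p \<in> {cyc_rest pos h a, cyc_rest neg h a} \<and> q \<in> {cyc_rest pos h a, cyc_rest neg h a}}"

definition perfect_matching :: "'a set \<Rightarrow> ('a \<Rightarrow> 'a) \<Rightarrow> ('a \<Rightarrow> 'a) \<Rightarrow> 'a set \<Rightarrow> bool" where
  "perfect_matching E pos neg P \<longleftrightarrow> P \<subseteq> E \<and>
     (\<forall>a\<in>E. card (cyc_orbit pos a \<inter> P) = 1 \<and> card (cyc_orbit neg a \<inter> P) = 1)"

text \<open>Contracting D: vertices of Q' are the classes of the equivalence generated by
  identifying t d and h d for d in D; arrows of Q' are E - D.\<close>
definition ctr_cls :: "'a set \<Rightarrow> ('a \<Rightarrow> 'v) \<Rightarrow> ('a \<Rightarrow> 'v) \<Rightarrow> 'v \<Rightarrow> 'v set" where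
  "ctr_cls D t h v = {w. (v, w) \<in> ({(t d, h d) | d. d \<in> D} \<union> {(h d, t d) | d. d \<in> D})\<^sup>*}"

definition ctr_path :: "'a set \<Rightarrow> ('a \<Rightarrow> 'v) \<Rightarrow> ('a \<Rightarrow> 'v) \<Rightarrow> ('v,'a) qpath \<Rightarrow> ('v set,'a) qpath" where
  "ctr_path D t h p = (ctr_cls D t h (fst p), filter (\<lambda>a. a \<notin> D) (snd p))"

definition ctr_psi :: "'a set \<Rightarrow> ('a \<Rightarrow> 'v) \<Rightarrow> ('a \<Rightarrow> 'v) \<Rightarrow> (('v,'a) qpath \<Rightarrow> 'k::field) \<Rightarrow> (('v set,'a) qpath \<Rightarrow> 'k)" where
  "ctr_psi D t h f = (\<lambda>r'. \<Sum>r\<in>{r. f r \<noteq> 0 \<and> ctr_path D t h r = r'}. f r)"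

end

theory Submission
  imports Defs "HOL-Combinatorics.Orbits"
begin

text \<open>A perfect matching P of Q' grades paths by their P-degree, the number of arrows of P they
  traverse. Each unit cycle of Q' contains exactly one arrow of P, so both sides of every dimer
  relation of Q' have the same start, end and P-degree; hence the dimer ideal of Q' consists of
  elements whose coefficients sum to zero on every (start, end, degree) component. Since P avoids
  the contracted arrows, \<psi> preserves P-degree, so applying \<psi> to the relations of Q shows that
  the two unit cycles of Q through any arrow meet P equally often. This number is therefore
  invariant under both face permutations, hence constant on the connected quiver Q. It is positive
  at an arrow of P, but zero at an arrow of a unit cycle all of whose arrows are contracted.\<close>

section \<open>Orbits of permutations\<close>

lemma
  assumes "permutation f"
  shows cyc_len_gt_0: "0 < cyc_len f a" and funpow_cyc_len: "(f ^^ cyc_len f a) a = a"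
proof -
  obtain n where "0 < n" "(f ^^ n) a = a" using permutation_self[OF assms] .
  then show "0 < cyc_len f a" "(f ^^ cyc_len f a) a = a"
    unfolding cyc_len_def by (metis (mono_tags, lifting) LeastI)+
qed

lemma funpow_neq_below_cyc_len: "0 < m \<Longrightarrow> m < cyc_len f a \<Longrightarrow> (f ^^ m) a \<noteq> a"
  unfolding cyc_len_def using not_less_Least by blast

lemma inj_on_funpow_cyc_len:
  assumes "permutation f"
  shows "inj_on (\<lambda>i. (f ^^ i) a) {..<cyc_len f a}"
proof (rule linorder_inj_onI')
  fix i j assume "i < j" "j \<in> {..<cyc_len f a}"
  have "inj (f ^^ i)"
    using permutation_bijective[OF assms] by (simp add: bij_is_inj)
  moreover have "(f ^^ j) a = (f ^^ i) ((f ^^ (j - i)) a)"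
    using \<open>i < j\<close> by (simp flip: funpow_add comp_apply[of "f ^^ i"])
  moreover have "(f ^^ (j - i)) a \<noteq> a"
    using \<open>i < j\<close> \<open>j \<in> _\<close> by (intro funpow_neq_below_cyc_len) auto
  ultimately show "(f ^^ i) a \<noteq> (f ^^ j) a"
    by (metis injD)
qed

lemma cyc_orbit_eq_orbit: "permutation f \<Longrightarrow> cyc_orbit f a = orbit f a"
  unfolding cyc_orbit_def by (simp add: orbit_altdef_permutation)

lemma cyc_orbit_conv_funpow:
  assumes "permutation f"
  shows "cyc_orbit f a = (\<lambda>i. (f ^^ i) a) ` {..<cyc_len f a}"
  using orbit_altdef_bounded[OF funpow_cyc_len cyc_len_gt_0, OF assms assms]
  by (auto simp: cyc_orbit_eq_orbit[OF assms])

lemma cyc_orbit_step: "permutation f \<Longrightarrow> cyc_orbit f (f a) = cyc_orbit f a"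
  by (simp add: cyc_orbit_eq_orbit permutation_orbit_step)

section \<open>Paths and their P-degree\<close>

definition path_deg :: "'a set \<Rightarrow> ('v,'a) qpath \<Rightarrow> nat" where
  "path_deg P r = length (filter (\<lambda>x. x \<in> P) (snd r))"

lemma card_cyc_orbit_Int:
  assumes "permutation f"
  shows "card (cyc_orbit f a \<inter> P) = of_bool (a \<in> P) + path_deg P (cyc_rest f h a)"
proof -
  let ?cyc = "map (\<lambda>i. (f ^^ i) a) [0..<cyc_len f a]"
  have "distinct ?cyc"
    using inj_on_funpow_cyc_len[OF assms] by (simp add: distinct_map atLeast0LessThan)
  moreover have "cyc_orbit f a \<inter> P = set (filter (\<lambda>x. x \<in> P) ?cyc)"
    using cyc_orbit_conv_funpow[OF assms] by auto
  ultimately have "card (cyc_orbit f a \<inter> P) = length (filter (\<lambda>x. x \<in> P) ?cyc)"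
    by (metis distinct_card distinct_filter)
  also have "?cyc = a # snd (cyc_rest f h a)"
    using cyc_len_gt_0[OF assms] by (simp add: cyc_rest_def upt_conv_Cons)
  finally show ?thesis
    by (simp add: path_deg_def)
qed

lemma card_cyc_orbit_Int_pos: "permutation f \<Longrightarrow> a \<in> P \<Longrightarrow> 0 < card (cyc_orbit f a \<inter> P)"
  by (metis card_cyc_orbit_Int add_gr_0 of_bool_eq(2) zero_less_one)

lemma p_end_cyc_rest:
  assumes "f permutes E" "finite E" "a \<in> E" and tail: "\<forall>x\<in>E. t (f x) = h x"
  shows "p_end h (cyc_rest f h a) = t a"
proof -
  have perm: "permutation f" using assms(1,2) permutation_permutes by blast
  let ?L = "cyc_len f a"
  have "Suc (?L - 1) = ?L" using cyc_len_gt_0[OF perm] by simp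
  then have "f ((f ^^ (?L - 1)) a) = a"
    using funpow_cyc_len[OF perm] by (metis comp_apply funpow.simps(2))
  then have last: "h ((f ^^ (?L - 1)) a) = t a"
    using tail permutes_in_funpow_image[OF assms(1,3)] by metis
  show ?thesis
  proof (cases "?L = 1")
    case True then show ?thesis using last by (simp add: p_end_def cyc_rest_def)
  next
    case False
    then have "1 < ?L" using cyc_len_gt_0[OF perm, of a] by linarith
    then show ?thesis using last by (simp add: p_end_def cyc_rest_def last_map)
  qed
qed

lemma is_path_cyc_rest:
  assumes "f permutes E" "a \<in> E" and tail: "\<forall>x\<in>E. t (f x) = h x" and "h ` E \<subseteq> V"
  shows "is_path V E t h (cyc_rest f h a)"
proof -
  let ?L = "cyc_len f a" and ?arr = "\<lambda>i. (f ^^ i) a"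
  have inE: "?arr i \<in> E" for i using permutes_in_funpow_image[OF assms(1,2)] .
  have step: "t (?arr (Suc i)) = h (?arr i)" for i using tail inE[of i] by simp
  show ?thesis
    unfolding is_path_def cyc_rest_def fst_conv snd_conv
  proof (intro conjI allI impI)
    show "h a \<in> V" using assms(2,4) by auto
    show "set (map ?arr [1..<?L]) \<subseteq> E" using inE by auto
  next
    assume "map ?arr [1..<?L] \<noteq> []"
    then show "t (hd (map ?arr [1..<?L])) = h a" using step[of 0] by (simp add: hd_map)
  next
    fix i assume "Suc i < length (map ?arr [1..<?L])"
    then show "h (map ?arr [1..<?L] ! i) = t (map ?arr [1..<?L] ! Suc i)"
      using step[of "Suc i"] by (simp del: funpow.simps)
  qed
qed

lemma is_path_append:
  assumes px: "is_path V E t h x" and py: "is_path V E t h y" and join: "p_end h y = fst x"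
  shows "is_path V E t h (fst y, snd y @ snd x)"
proof -
  obtain v ys where y: "y = (v, ys)" by (cases y)
  obtain w xs where x: "x = (w, xs)" by (cases x)
  have ys: "v \<in> V" "set ys \<subseteq> E" "ys \<noteq> [] \<longrightarrow> t (hd ys) = v"
      "\<forall>i. Suc i < length ys \<longrightarrow> h (ys ! i) = t (ys ! Suc i)"
    using py unfolding is_path_def y by auto
  have xs: "set xs \<subseteq> E" "xs \<noteq> [] \<longrightarrow> t (hd xs) = w"
      "\<forall>i. Suc i < length xs \<longrightarrow> h (xs ! i) = t (xs ! Suc i)"
    using px unfolding is_path_def x by auto
  have w: "(if ys = [] then v else h (last ys)) = w"
    using join unfolding p_end_def x y by (cases "ys = []") auto
  have "h ((ys @ xs) ! i) = t ((ys @ xs) ! Suc i)" if i: "Suc i < length (ys @ xs)" for i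
  proof (cases "Suc i < length ys")
    case True then show ?thesis using ys(4) by (simp add: nth_append)
  next
    case False
    show ?thesis
    proof (cases "Suc i = length ys")
      case True
      then have "ys \<noteq> []" "xs \<noteq> []" using i by auto
      moreover have "(ys @ xs) ! i = last ys" "(ys @ xs) ! Suc i = hd xs"
        using True \<open>ys \<noteq> []\<close> \<open>xs \<noteq> []\<close>
        by (auto simp: nth_append last_conv_nth hd_conv_nth simp flip: True)
      ultimately show ?thesis using w xs(2) by simp
    next
      case False
      then have "length ys \<le> i" using \<open>\<not> Suc i < length ys\<close> by simp
      then show ?thesis using i xs(3) by (simp add: nth_append Suc_diff_le)
    qed
  qed
  moreover have "ys @ xs \<noteq> [] \<longrightarrow> t (hd (ys @ xs)) = v"
    using ys(3) xs(2) w by (cases ys) auto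
  ultimately show ?thesis
    unfolding is_path_def x y using ys xs by auto
qed

lemma p_end_append: "p_end h y = fst x \<Longrightarrow> p_end h (fst y, snd y @ snd x) = p_end h x"
  by (auto simp: p_end_def)

lemma path_deg_append: "path_deg P (fst y, snd y @ snd x) = path_deg P y + path_deg P x"
  by (simp add: path_deg_def)

lemma pcomp_eq_Some_iff:
  "pcomp h x y = Some r \<longleftrightarrow> p_end h y = fst x \<and> r = (fst y, snd y @ snd x)"
  by (auto simp: pcomp_def)

lemma kQ_mult_support:
  "{r. kQ_mult h u f r \<noteq> 0} \<subseteq>
     (\<lambda>(x, y). (fst y, snd y @ snd x)) ` {(x, y). u x \<noteq> 0 \<and> f y \<noteq> 0 \<and> p_end h y = fst x}"
proof
  fix r assume "r \<in> {r. kQ_mult h u f r \<noteq> 0}"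
  then have "{(x, y). u x \<noteq> 0 \<and> f y \<noteq> 0 \<and> pcomp h x y = Some r} \<noteq> {}"
    unfolding kQ_mult_def by force
  then obtain x y where "u x \<noteq> 0" "f y \<noteq> 0" "pcomp h x y = Some r" by blast
  then show "r \<in> (\<lambda>(x, y). (fst y, snd y @ snd x)) ` {(x, y). u x \<noteq> 0 \<and> f y \<noteq> 0 \<and> p_end h y = fst x}"
    unfolding pcomp_eq_Some_iff by (intro image_eqI[where x = "(x, y)"]) auto
qed

lemma in_kQ_kQ_mult:
  assumes u: "in_kQ V E t h u" and f: "in_kQ V E t h f"
  shows "in_kQ V E t h (kQ_mult h u f)"
proof -
  let ?S = "{(x, y). u x \<noteq> 0 \<and> f y \<noteq> 0 \<and> p_end h y = fst x}"
  have "?S \<subseteq> {x. u x \<noteq> 0} \<times> {y. f y \<noteq> 0}" by auto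
  then have "finite ?S"
    using u f unfolding in_kQ_def by (meson finite_SigmaI finite_subset)
  moreover have "is_path V E t h (fst y, snd y @ snd x)" if "(x, y) \<in> ?S" for x y
  proof -
    from that have "u x \<noteq> 0" "f y \<noteq> 0" "p_end h y = fst x" by auto
    then show ?thesis using u f is_path_append unfolding in_kQ_def by blast
  qed
  ultimately show ?thesis
    using kQ_mult_support[of h u f] unfolding in_kQ_def by (auto intro: finite_subset)
qed

lemma sum_kQ_mult:
  fixes u f :: "('v,'a) qpath \<Rightarrow> 'k::field"
  assumes fin: "finite {x. u x \<noteq> 0}" "finite {y. f y \<noteq> 0}"
  shows "(\<Sum>r | kQ_mult h u f r \<noteq> 0. if B r then kQ_mult h u f r else 0)
       = (\<Sum>x | u x \<noteq> 0. \<Sum>y | f y \<noteq> 0.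
            if p_end h y = fst x \<and> B (fst y, snd y @ snd x) then u x * f y else 0)"
proof -
  define S where "S = {x. u x \<noteq> 0} \<times> {y. f y \<noteq> 0}"
  define cat :: "('v,'a) qpath \<times> ('v,'a) qpath \<Rightarrow> ('v,'a) qpath"
    where "cat = (\<lambda>(x, y). (fst y, snd y @ snd x))"
  define R where "R = cat ` S"
  define g where "g r p = (if p_end h (snd p) = fst (fst p) \<and> cat p = r then u (fst p) * f (snd p) else 0)"
    for r p
  have "finite S" "finite R" unfolding R_def S_def using fin by auto
  have supp: "{r. kQ_mult h u f r \<noteq> 0} \<subseteq> R"
    using kQ_mult_support[of h u f] unfolding R_def S_def cat_def by auto
  have mult: "kQ_mult h u f r = (\<Sum>p\<in>S. g r p)" for r
  proof -
    have "{(x, y). u x \<noteq> 0 \<and> f y \<noteq> 0 \<and> pcomp h x y = Some r}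
        = {p \<in> S. p_end h (snd p) = fst (fst p) \<and> cat p = r}"
      unfolding S_def cat_def by (auto simp: pcomp_eq_Some_iff)
    then show ?thesis
      unfolding kQ_mult_def g_def by (simp add: sum.inter_filter[OF \<open>finite S\<close>] case_prod_beta')
  qed
  have "(\<Sum>r | kQ_mult h u f r \<noteq> 0. if B r then kQ_mult h u f r else 0)
      = (\<Sum>r\<in>R. if B r then kQ_mult h u f r else 0)"
    by (rule sum.mono_neutral_left[OF \<open>finite R\<close> supp]) auto
  also have "\<dots> = (\<Sum>r\<in>R. \<Sum>p\<in>S. if B r then g r p else 0)"
    by (intro sum.cong) (simp_all add: mult)
  also have "\<dots> = (\<Sum>p\<in>S. \<Sum>r\<in>R. if B r then g r p else 0)"
    by (rule sum.swap)
  also have "\<dots> = (\<Sum>p\<in>S. if p_end h (snd p) = fst (fst p) \<and> B (cat p) then u (fst p) * f (snd p) else 0)"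
  proof (rule sum.cong[OF refl])
    fix p assume "p \<in> S"
    have "(\<Sum>r\<in>R. if B r then g r p else 0) = (\<Sum>r\<in>R. if r = cat p then
        (if p_end h (snd p) = fst (fst p) \<and> B (cat p) then u (fst p) * f (snd p) else 0) else 0)"
      by (intro sum.cong) (auto simp: g_def)
    also have "\<dots> = (if p_end h (snd p) = fst (fst p) \<and> B (cat p) then u (fst p) * f (snd p) else 0)"
      using \<open>p \<in> S\<close> \<open>finite R\<close> unfolding R_def by (simp add: sum.delta)
    finally show "(\<Sum>r\<in>R. if B r then g r p else 0) = \<dots>" .
  qed
  finally show ?thesis
    unfolding S_def cat_def by (simp add: sum.cartesian_product case_prod_beta')
qed

section \<open>The component kernel\<close>

text \<open>component_kernel is the kernel of the algebra map from kQ to (V \<times> V)-matrices over k[x]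
  that sends an arrow a to x^[a \<in> P] times the matrix unit at (t a, h a): the coefficient of x^n
  at (s, e) in the image of g is component_sum h P g s e n. This is why it is a two-sided ideal.\<close>

definition in_component :: "('a \<Rightarrow> 'v) \<Rightarrow> 'a set \<Rightarrow> 'v \<Rightarrow> 'v \<Rightarrow> nat \<Rightarrow> ('v,'a) qpath \<Rightarrow> bool" where
  "in_component h P s e n r \<longleftrightarrow> fst r = s \<and> p_end h r = e \<and> path_deg P r = n"

definition component_sum ::
    "('a \<Rightarrow> 'v) \<Rightarrow> 'a set \<Rightarrow> (('v,'a) qpath \<Rightarrow> 'k::field) \<Rightarrow> 'v \<Rightarrow> 'v \<Rightarrow> nat \<Rightarrow> 'k" where
  "component_sum h P g s e n = (\<Sum>r | g r \<noteq> 0. if in_component h P s e n r then g r else 0)"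

definition component_kernel ::
    "'v set \<Rightarrow> 'a set \<Rightarrow> ('a \<Rightarrow> 'v) \<Rightarrow> ('a \<Rightarrow> 'v) \<Rightarrow> 'a set \<Rightarrow> (('v,'a) qpath \<Rightarrow> 'k::field) set" where
  "component_kernel V E t h P = {g. in_kQ V E t h g \<and> (\<forall>s e n. component_sum h P g s e n = 0)}"

lemma component_sum_superset:
  assumes "finite S" "{r. g r \<noteq> 0} \<subseteq> S"
  shows "component_sum h P g s e n = (\<Sum>r\<in>S. if in_component h P s e n r then g r else 0)"
  unfolding component_sum_def by (rule sum.mono_neutral_left[OF assms]) auto

lemma component_sum_add:
  assumes "finite {r. f r \<noteq> 0}" "finite {r. g r \<noteq> 0}"
  shows "component_sum h P (\<lambda>r. f r + g r) s e n = component_sum h P f s e n + component_sum h P g s e n"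
proof -
  let ?S = "{r. f r \<noteq> 0} \<union> {r. g r \<noteq> 0}"
  have "finite ?S" using assms by simp
  then show ?thesis
    by (subst (1 2 3) component_sum_superset[where S = ?S]) (auto simp: sum.distrib[symmetric] intro!: sum.cong)
qed

lemma component_sum_smult:
  assumes "finite {r. f r \<noteq> 0}"
  shows "component_sum h P (\<lambda>r. c * f r) s e n = c * component_sum h P f s e n"
  by (subst (1 2) component_sum_superset[OF assms]) (auto simp: sum_distrib_left intro!: sum.cong)

lemma in_component_append_iff_prefix:
  "(p_end h y = fst x \<and> in_component h P s e n (fst y, snd y @ snd x)) \<longleftrightarrow>
     p_end h x = e \<and> path_deg P x \<le> n \<and> in_component h P s (fst x) (n - path_deg P x) y"
  by (auto simp: in_component_def p_end_append path_deg_append)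

lemma in_component_append_iff_suffix:
  "(p_end h y = fst x \<and> in_component h P s e n (fst y, snd y @ snd x)) \<longleftrightarrow>
     fst y = s \<and> path_deg P y \<le> n \<and> in_component h P (p_end h y) e (n - path_deg P y) x"
  by (auto simp: in_component_def p_end_append path_deg_append)

lemma component_sum_kQ_mult:
  assumes "finite {x. u x \<noteq> 0}" "finite {y. f y \<noteq> 0}"
  shows "component_sum h P (kQ_mult h u f) s e n = (\<Sum>x | u x \<noteq> 0.
      if p_end h x = e \<and> path_deg P x \<le> n then u x * component_sum h P f s (fst x) (n - path_deg P x) else 0)"
    and "component_sum h P (kQ_mult h u f) s e n = (\<Sum>y | f y \<noteq> 0.
      if fst y = s \<and> path_deg P y \<le> n then component_sum h P u (p_end h y) e (n - path_deg P y) * f y else 0)"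
proof -
  show "component_sum h P (kQ_mult h u f) s e n = (\<Sum>x | u x \<noteq> 0.
      if p_end h x = e \<and> path_deg P x \<le> n then u x * component_sum h P f s (fst x) (n - path_deg P x) else 0)"
    unfolding component_sum_def sum_kQ_mult[OF assms] in_component_append_iff_prefix
    by (auto simp: sum_distrib_left intro!: sum.cong)
  have "component_sum h P (kQ_mult h u f) s e n = (\<Sum>y | f y \<noteq> 0. \<Sum>x | u x \<noteq> 0.
      if p_end h y = fst x \<and> in_component h P s e n (fst y, snd y @ snd x) then u x * f y else 0)"
    unfolding component_sum_def sum_kQ_mult[OF assms] by (rule sum.swap)
  also have "\<dots> = (\<Sum>y | f y \<noteq> 0.
      if fst y = s \<and> path_deg P y \<le> n then component_sum h P u (p_end h y) e (n - path_deg P y) * f y else 0)"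
  proof (rule sum.cong[OF refl])
    fix y
    show "(\<Sum>x | u x \<noteq> 0. if p_end h y = fst x \<and> in_component h P s e n (fst y, snd y @ snd x)
          then u x * f y else 0)
        = (if fst y = s \<and> path_deg P y \<le> n
          then component_sum h P u (p_end h y) e (n - path_deg P y) * f y else 0)"
      unfolding in_component_append_iff_suffix component_sum_def
      by (cases "fst y = s \<and> path_deg P y \<le> n") (auto simp: sum_distrib_right intro!: sum.cong)
  qed
  finally show "component_sum h P (kQ_mult h u f) s e n = (\<Sum>y | f y \<noteq> 0.
      if fst y = s \<and> path_deg P y \<le> n then component_sum h P u (p_end h y) e (n - path_deg P y) * f y else 0)" .
qed

lemma two_sided_ideal_component_kernel:
  "two_sided_ideal V E t h (component_kernel V E t h P :: (('v,'a) qpath \<Rightarrow> 'k::field) set)"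
  unfolding two_sided_ideal_def
proof (intro conjI ballI allI impI)
  show "component_kernel V E t h P \<subseteq> {f. in_kQ V E t h f}"
    by (auto simp: component_kernel_def)
  show "(\<lambda>_. 0) \<in> component_kernel V E t h P"
    by (simp add: component_kernel_def component_sum_def in_kQ_def)
  fix f :: "('v,'a) qpath \<Rightarrow> 'k" assume f: "f \<in> component_kernel V E t h P"
  then have fin: "finite {r. f r \<noteq> 0}" and f_sum: "\<And>s e n. component_sum h P f s e n = 0"
    by (simp_all add: component_kernel_def in_kQ_def)
  show "(\<lambda>r. c * f r) \<in> component_kernel V E t h P" for c
    using f fin by (simp add: component_kernel_def component_sum_smult in_kQ_def)
  show "(\<lambda>r. f r + g r) \<in> component_kernel V E t h P" if "g \<in> component_kernel V E t h P" for g
  proof -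
    have "{r. f r + g r \<noteq> 0} \<subseteq> {r. f r \<noteq> 0} \<union> {r. g r \<noteq> 0}" by auto
    then have "in_kQ V E t h (\<lambda>r. f r + g r)"
      using f that unfolding component_kernel_def in_kQ_def
      by (metis (mono_tags, lifting) add.left_neutral finite_Un finite_subset mem_Collect_eq)
    then show ?thesis
      using f that by (simp add: component_kernel_def component_sum_add in_kQ_def)
  qed
  fix u :: "('v,'a) qpath \<Rightarrow> 'k" assume u: "in_kQ V E t h u"
  then have fin_u: "finite {r. u r \<noteq> 0}" by (simp add: in_kQ_def)
  show "kQ_mult h u f \<in> component_kernel V E t h P" "kQ_mult h f u \<in> component_kernel V E t h P"
    using f u by (simp_all add: component_kernel_def in_kQ_kQ_mult f_sum
        component_sum_kQ_mult(1)[OF fin_u fin] component_sum_kQ_mult(2)[OF fin fin_u] cong: if_cong)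
qed

lemma component_sum_delta_diff:
  "component_sum h P (\<lambda>r. kQ_delta p r - kQ_delta q r) s e n
     = of_bool (in_component h P s e n p) - of_bool (in_component h P s e n q)"
proof (cases "p = q")
  case True then show ?thesis by (simp add: component_sum_def)
next
  case False
  have "{r. kQ_delta p r - kQ_delta q r \<noteq> (0::'k::field)} \<subseteq> {p, q}" by (auto simp: kQ_delta_def)
  then have "component_sum h P (\<lambda>r. kQ_delta p r - kQ_delta q r) s e n
      = (\<Sum>r\<in>{p, q}. if in_component h P s e n r then kQ_delta p r - kQ_delta q r else 0)"
    by (intro component_sum_superset) simp_all
  also have "\<dots> = of_bool (in_component h P s e n p) - of_bool (in_component h P s e n q)"
    using False by (simp add: kQ_delta_def)
  finally show ?thesis .
qed

lemma in_kQ_delta_diff: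
  assumes "is_path V E t h p" "is_path V E t h q"
  shows "in_kQ V E t h (\<lambda>r. kQ_delta p r - kQ_delta q r)"
proof -
  have "{r. kQ_delta p r - kQ_delta q r \<noteq> 0} \<subseteq> {p, q}" by (auto simp: kQ_delta_def)
  with assms show ?thesis unfolding in_kQ_def by (auto intro: finite_subset)
qed

lemma delta_diff_in_component_kernel:
  assumes "is_path V E t h p" "is_path V E t h q"
    and "fst p = fst q" "p_end h p = p_end h q" "path_deg P p = path_deg P q"
  shows "(\<lambda>r. kQ_delta p r - kQ_delta q r) \<in> component_kernel V E t h P"
  using assms by (simp add: component_kernel_def in_kQ_delta_diff component_sum_delta_diff in_component_def)

lemma path_deg_eq_if_delta_diff_in_component_kernel:
  assumes "(\<lambda>r. kQ_delta p r - kQ_delta q r :: 'k::field) \<in> component_kernel V E t h P"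
  shows "path_deg P p = path_deg P q"
proof -
  have "component_sum h P (\<lambda>r. kQ_delta p r - kQ_delta q r :: 'k) (fst p) (p_end h p) (path_deg P p) = 0"
    using assms unfolding component_kernel_def by blast
  then show ?thesis by (auto simp: component_sum_delta_diff in_component_def split: if_splits)
qed

lemma in_component_cyc_rest:
  assumes "f permutes E" "finite E" "a \<in> E" "\<forall>x\<in>E. t (f x) = h x"
  shows "in_component h P (h a) (t a) (card (cyc_orbit f a \<inter> P) - of_bool (a \<in> P)) (cyc_rest f h a)"
proof -
  have "permutation f" using assms(1,2) permutation_permutes by blast
  then show ?thesis
    using p_end_cyc_rest[OF assms] card_cyc_orbit_Int[of f a P h]
    by (simp add: in_component_def cyc_rest_def)
qed

lemma dimer_ideal_subset_component_kernel:
  assumes dq: "dimer_quiver V E t h pos neg" and pm: "perfect_matching E pos neg P"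
  shows "dimer_ideal V E t h pos neg \<subseteq> (component_kernel V E t h P :: (('v,'a) qpath \<Rightarrow> 'k::field) set)"
proof -
  from dq have fin: "finite E" and hV: "h ` E \<subseteq> V" and perm: "pos permutes E" "neg permutes E"
    and tail: "\<forall>x\<in>E. t (pos x) = h x" "\<forall>x\<in>E. t (neg x) = h x"
    unfolding dimer_quiver_def by auto
  have rest: "is_path V E t h r \<and> in_component h P (h a) (t a) (1 - of_bool (a \<in> P)) r"
    if a: "a \<in> E" and r: "r \<in> {cyc_rest pos h a, cyc_rest neg h a}" for a r
  proof -
    have cards: "card (cyc_orbit pos a \<inter> P) = 1" "card (cyc_orbit neg a \<inter> P) = 1"
      using pm a unfolding perfect_matching_def by auto
    from r consider "r = cyc_rest pos h a" | "r = cyc_rest neg h a" by blast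
    then show ?thesis
      using cards is_path_cyc_rest[OF perm(1) a tail(1) hV] is_path_cyc_rest[OF perm(2) a tail(2) hV]
        in_component_cyc_rest[OF perm(1) fin a tail(1), of P]
        in_component_cyc_rest[OF perm(2) fin a tail(2), of P]
      by cases simp_all
  qed
  have "{(\<lambda>r. kQ_delta p r - kQ_delta q r) | a p q. a \<in> E \<and>
        p \<in> {cyc_rest pos h a, cyc_rest neg h a} \<and> q \<in> {cyc_rest pos h a, cyc_rest neg h a}}
      \<subseteq> (component_kernel V E t h P :: (('v,'a) qpath \<Rightarrow> 'k) set)"
  proof (intro subsetI, elim CollectE exE conjE)
    fix g a p q
    assume "g = (\<lambda>r. kQ_delta p r - kQ_delta q r)" "a \<in> E"
      "p \<in> {cyc_rest pos h a, cyc_rest neg h a}" "q \<in> {cyc_rest pos h a, cyc_rest neg h a}"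
    then show "g \<in> component_kernel V E t h P"
      using rest[of a p] rest[of a q]
      by (simp add: delta_diff_in_component_kernel in_component_def)
  qed
  then show ?thesis
    unfolding dimer_ideal_def gen_ideal_def using two_sided_ideal_component_kernel by blast
qed

lemma ctr_psi_delta_diff:
  "ctr_psi D t h (\<lambda>r. kQ_delta p r - kQ_delta q r :: 'k::field)
     = (\<lambda>r'. kQ_delta (ctr_path D t h p) r' - kQ_delta (ctr_path D t h q) r')"
proof (cases "p = q")
  case True then show ?thesis by (simp add: ctr_psi_def)
next
  case False
  show ?thesis
  proof
    fix r'
    have supp: "{r. kQ_delta p r - kQ_delta q r \<noteq> (0::'k) \<and> ctr_path D t h r = r'}
        = {r \<in> {p, q}. ctr_path D t h r = r'}"
      using False by (auto simp: kQ_delta_def)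
    have "ctr_psi D t h (\<lambda>r. kQ_delta p r - kQ_delta q r :: 'k) r'
        = (\<Sum>r\<in>{p, q}. if ctr_path D t h r = r' then kQ_delta p r - kQ_delta q r else 0)"
      unfolding ctr_psi_def supp by (subst sum.inter_filter) simp_all
    also have "\<dots> = kQ_delta (ctr_path D t h p) r' - kQ_delta (ctr_path D t h q) r'"
      using False by (simp add: kQ_delta_def)
    finally show "ctr_psi D t h (\<lambda>r. kQ_delta p r - kQ_delta q r :: 'k) r' = \<dots>" .
  qed
qed

lemma path_deg_ctr_path: "P \<inter> D = {} \<Longrightarrow> path_deg P (ctr_path D t h r) = path_deg P r"
  by (auto simp: path_deg_def ctr_path_def filter_filter intro!: arg_cong[where f = length] filter_cong)

lemma contraction_card_cyc_orbit_pos_eq_neg: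
  fixes pos neg pos' neg' :: "'a \<Rightarrow> 'a"
  assumes perm: "permutation pos" "permutation neg"
    and dq': "dimer_quiver (ctr_cls D t h ` V) (E - D) (ctr_cls D t h \<circ> t) (ctr_cls D t h \<circ> h) pos' neg'"
    and psi: "\<forall>f \<in> (dimer_ideal V E t h pos neg :: (('v,'a) qpath \<Rightarrow> 'k::field) set).
           ctr_psi D t h f \<in> dimer_ideal (ctr_cls D t h ` V) (E - D) (ctr_cls D t h \<circ> t) (ctr_cls D t h \<circ> h) pos' neg'"
    and pm: "perfect_matching (E - D) pos' neg' P"
    and a: "a \<in> E"
  shows "card (cyc_orbit pos a \<inter> P) = card (cyc_orbit neg a \<inter> P)"
proof -
  let ?p = "cyc_rest pos h a" and ?q = "cyc_rest neg h a"
  have "(\<lambda>r. kQ_delta ?p r - kQ_delta ?q r :: 'k) \<in> dimer_ideal V E t h pos neg"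
    unfolding dimer_ideal_def gen_ideal_def using a by blast
  then have "(\<lambda>r. kQ_delta (ctr_path D t h ?p) r - kQ_delta (ctr_path D t h ?q) r :: 'k)
      \<in> component_kernel (ctr_cls D t h ` V) (E - D) (ctr_cls D t h \<circ> t) (ctr_cls D t h \<circ> h) P"
    using psi dimer_ideal_subset_component_kernel[OF dq' pm] by (auto simp flip: ctr_psi_delta_diff)
  then have "path_deg P (ctr_path D t h ?p) = path_deg P (ctr_path D t h ?q)"
    by (rule path_deg_eq_if_delta_diff_in_component_kernel)
  moreover have "P \<inter> D = {}" using pm by (auto simp: perfect_matching_def)
  ultimately show ?thesis
    by (simp add: card_cyc_orbit_Int[OF perm(1), of a P h] card_cyc_orbit_Int[OF perm(2), of a P h]
        path_deg_ctr_path)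
qed

lemma dimer_quiver_eq_if_same_head:
  assumes dq: "dimer_quiver V E t h pos neg"
    and inv: "\<forall>x\<in>E. w (pos x) = w x \<and> w (neg x) = w x"
    and "a \<in> E" "b \<in> E" "h a = h b"
  shows "w a = w b"
proof -
  from dq have perm: "pos permutes E" "neg permutes E"
    and rotation: "\<exists>n. ((\<lambda>x. inv neg (pos x)) ^^ n) a = b"
    using assms(3-5) unfolding dimer_quiver_def by auto
  have "(inv neg \<circ> pos) permutes E"
    using perm by (simp add: permutes_compose permutes_inv)
  moreover have "w (inv neg (pos x)) = w x" if "x \<in> E" for x
  proof -
    have "pos x \<in> E" using perm(1) that by (simp add: permutes_in_image)
    then have "inv neg (pos x) \<in> E" "neg (inv neg (pos x)) = pos x"
      using permutes_in_image[OF permutes_inv[OF perm(2)]] permutes_inverses(1)[OF perm(2)] by auto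
    then show ?thesis using inv that by metis
  qed
  ultimately have "w (((inv neg \<circ> pos) ^^ n) a) = w a" for n
    using permutes_in_funpow_image[of _ E a] \<open>a \<in> E\<close> by (induction n) auto
  with rotation show ?thesis by (auto simp: comp_def)
qed

lemma dimer_quiver_invariant_const:
  assumes dq: "dimer_quiver V E t h pos neg"
    and inv: "\<forall>x\<in>E. w (pos x) = w x \<and> w (neg x) = w x"
    and "a \<in> E" "b \<in> E"
  shows "w a = w b"
proof -
  from dq have perm: "pos permutes E" and hV: "h ` E \<subseteq> V"
    and tail: "\<forall>x\<in>E. t (pos x) = h x"
    and conn: "\<forall>u\<in>V. \<forall>v\<in>V. (u, v) \<in> ({(t a, h a) | a. a \<in> E} \<union> {(h a, t a) | a. a \<in> E})\<^sup>*"
    unfolding dimer_quiver_def by auto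
  have head: "\<exists>c'\<in>E. h c' = v \<and> w c' = w c" if "c \<in> E" "v \<in> {h c, t c}" for c v
  proof (cases "v = h c")
    case False
    then have "v = t c" using that by blast
    have "inv pos c \<in> E" "pos (inv pos c) = c"
      using permutes_in_image[OF permutes_inv[OF perm]] permutes_inverses(1)[OF perm] that by auto
    then have "h (inv pos c) = v \<and> w (inv pos c) = w c"
      using tail inv \<open>v = t c\<close> by metis
    then show ?thesis using \<open>inv pos c \<in> E\<close> by blast
  qed (use that in blast)
  have incident: "w c = w d" if "c \<in> E" "d \<in> E" "v \<in> {h c, t c}" "v \<in> {h d, t d}" for c d v
    using head[OF that(1,3)] head[OF that(2,4)] dimer_quiver_eq_if_same_head[OF dq inv] by metis
  have "\<exists>c\<in>E. v \<in> {h c, t c} \<and> w c = w a"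
    if "(h a, v) \<in> ({(t a, h a) | a. a \<in> E} \<union> {(h a, t a) | a. a \<in> E})\<^sup>*" for v
    using that
  proof (induction rule: rtrancl_induct)
    case base then show ?case using \<open>a \<in> E\<close> by blast
  next
    case (step u v)
    then obtain c where "c \<in> E" "u \<in> {h c, t c}" "w c = w a" by blast
    moreover from step.hyps(2) obtain d where "d \<in> E" "u \<in> {h d, t d}" "v \<in> {h d, t d}" by blast
    ultimately show ?case using incident by metis
  qed
  then obtain c where "c \<in> E" "h b \<in> {h c, t c}" "w c = w a"
    using conn hV \<open>a \<in> E\<close> \<open>b \<in> E\<close> by blast
  then show ?thesis using incident[of c b "h b"] \<open>b \<in> E\<close> by simp
qed

lemma dimer_quiver_arrows_nonempty: "dimer_quiver V E t h pos neg \<Longrightarrow> E \<noteq> {}"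
  unfolding dimer_quiver_def by blast

lemma perfect_matching_nonempty: "perfect_matching E pos neg P \<Longrightarrow> E \<noteq> {} \<Longrightarrow> P \<noteq> {}"
  unfolding perfect_matching_def by force

theorem lemma3p5:
  fixes V :: "'v set" and E :: "'a set" and t h :: "'a \<Rightarrow> 'v"
    and pos neg pos' neg' :: "'a \<Rightarrow> 'a" and D P :: "'a set"
  assumes "alg_closed TYPE('k::field)"
    and "dimer_quiver V E t h pos neg"
    and "D \<subseteq> E"
    and "dimer_quiver (ctr_cls D t h ` V) (E - D) (ctr_cls D t h \<circ> t) (ctr_cls D t h \<circ> h) pos' neg'"
    and "\<forall>f \<in> (dimer_ideal V E t h pos neg :: (('v,'a) qpath \<Rightarrow> 'k) set).
           ctr_psi D t h f \<in> dimer_ideal (ctr_cls D t h ` V) (E - D) (ctr_cls D t h \<circ> t) (ctr_cls D t h \<circ> h) pos' neg'"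
    and "perfect_matching (E - D) pos' neg' P"
  shows "\<forall>a\<in>E. \<not> cyc_orbit pos a \<subseteq> D \<and> \<not> cyc_orbit neg a \<subseteq> D"
proof -
  have perm: "pos permutes E" "neg permutes E" and "finite E"
    using assms(2) by (auto simp: dimer_quiver_def)
  then have "permutation pos" "permutation neg" by (auto simp: permutation_permutes)
  have PED: "P \<subseteq> E - D" using assms(6) by (simp add: perfect_matching_def)
  define w where "w a = card (cyc_orbit pos a \<inter> P)" for a
  have w_neg: "w a = card (cyc_orbit neg a \<inter> P)" if "a \<in> E" for a
    unfolding w_def using contraction_card_cyc_orbit_pos_eq_neg[OF \<open>permutation pos\<close>
        \<open>permutation neg\<close> assms(4-6) that] .
  have "w (pos a) = w a \<and> w (neg a) = w a" if "a \<in> E" for a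
    using w_neg[OF that] w_neg[OF permutes_in_image[OF perm(2), THEN iffD2, OF that]]
    by (simp add: w_def cyc_orbit_step[OF \<open>permutation pos\<close>] cyc_orbit_step[OF \<open>permutation neg\<close>])
  then have w_const: "w a = w b" if "a \<in> E" "b \<in> E" for a b
    using dimer_quiver_invariant_const[OF assms(2) _ that] by blast
  obtain x where "x \<in> P"
    using perfect_matching_nonempty[OF assms(6) dimer_quiver_arrows_nonempty[OF assms(4)]] by blast
  then have "w x \<noteq> 0"
    unfolding w_def using card_cyc_orbit_Int_pos[OF \<open>permutation pos\<close>] by simp
  have False if "a \<in> E" "cyc_orbit pos a \<subseteq> D \<or> cyc_orbit neg a \<subseteq> D" for a
  proof -
    have "cyc_orbit pos a \<inter> P = {} \<or> cyc_orbit neg a \<inter> P = {}" using that(2) PED by blast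
    then have "w a = 0" using w_neg[OF that(1)] unfolding w_def by auto
    moreover have "w a = w x" using w_const \<open>x \<in> P\<close> PED that(1) by blast
    ultimately show False using \<open>w x \<noteq> 0\<close> by simp
  qed
  then show ?thesis by blast
qed

end
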